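(* Let $p\equiv1\pmod5$ be prime and let $\psi$ be a character of order $5$ of $\mathbb{F}_p^*$. If $a,b,c\in\mathbb{Z}$ satisfy $a+c\not\equiv0\pmod5$ and $b+c\not\equiv0\pmod5$, then \[ \sum_{\chi}\chi(-1)\,J(\bar\chi\psi^a,\bar\chi\psi^b,\chi\psi^c)=-(p-1), \] where the sum runs over all multiplicative characters $\chi$ of $\mathbb{F}_p^*$.
   Context: Multiplicative characters of $\mathbb{F}_p^*$ are extended to $\mathbb{F}_p$ by $\chi(0):=0$, including for the trivial character; $\bar\chi$ denotes the inverse character. For characters $\chi_1,\dots,\chi_k$, the generalized Jacobi sum is $J(\chi_1,\dots,\chi_k):=\sum_{t_1+\dots+t_k=1,\ t_i\in\mathbb{F}_p}\chi_1(t_1)\cdots\chi_k(t_k)$. *)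

theory Defs
  imports Complex_Main "HOL-Computational_Algebra.Primes"
begin

text \<open>F_p is represented by the residues {0..<p} (nat). A multiplicative character
of F_p^* extended by chi(0)=0 is a function nat => complex that is multiplicative on
{1..<p} (modulo p), sends 1 to 1, vanishes at 0 and (normalisation) outside {0..<p}.\<close>

definition mchar :: "nat \<Rightarrow> (nat \<Rightarrow> complex) \<Rightarrow> bool" where
  "mchar p \<chi> \<longleftrightarrow> \<chi> 0 = 0 \<and> \<chi> 1 = 1 \<and>
     (\<forall>x\<in>{1..<p}. \<forall>y\<in>{1..<p}. \<chi> ((x * y) mod p) = \<chi> x * \<chi> y) \<and>
     (\<forall>x. p \<le> x \<longrightarrow> \<chi> x = 0)"

definition chars :: "nat \<Rightarrow> (nat \<Rightarrow> complex) set" where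
  "chars p = {\<chi>. mchar p \<chi>}"

text \<open>Inverse character (inverse 0 = 0 in Isabelle, so chi-bar(0) = 0).\<close>
definition cinv :: "(nat \<Rightarrow> complex) \<Rightarrow> nat \<Rightarrow> complex" where
  "cinv \<chi> = (\<lambda>x. inverse (\<chi> x))"

definition cmul :: "(nat \<Rightarrow> complex) \<Rightarrow> (nat \<Rightarrow> complex) \<Rightarrow> nat \<Rightarrow> complex" where
  "cmul \<chi> \<phi> = (\<lambda>x. \<chi> x * \<phi> x)"

text \<open>Integer power of a character, again with value 0 at 0 (also for exponent 0).\<close>
definition cpow :: "(nat \<Rightarrow> complex) \<Rightarrow> int \<Rightarrow> nat \<Rightarrow> complex" where
  "cpow \<chi> a = (\<lambda>x. if \<chi> x = 0 then 0 else \<chi> x powi a)"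

definition char_order :: "nat \<Rightarrow> (nat \<Rightarrow> complex) \<Rightarrow> nat" where
  "char_order p \<chi> = (LEAST n. n > 0 \<and> (\<forall>x\<in>{1..<p}. \<chi> x ^ n = 1))"

definition jacobi3 :: "nat \<Rightarrow> (nat \<Rightarrow> complex) \<Rightarrow> (nat \<Rightarrow> complex) \<Rightarrow> (nat \<Rightarrow> complex) \<Rightarrow> complex" where
  "jacobi3 p \<chi>1 \<chi>2 \<chi>3 =
     (\<Sum>(t1, t2, t3) \<in> {(t1, t2, t3). t1 < p \<and> t2 < p \<and> t3 < p \<and> (t1 + t2 + t3) mod p = 1 mod p}.
        \<chi>1 t1 * \<chi>2 t2 * \<chi>3 t3)"

end

theory Submission
  imports Defs "HOL-Number_Theory.Number_Theory"
begin

(*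
  Expanding the Jacobi sums and summing over \<chi> first, orthogonality of characters keeps
  exactly the triples of units with t1 + t2 + t3 = 1 and t1 t2 = -t3, each with weight p - 1.
  Eliminating t3 turns these conditions into (t1 - 1)(t2 - 1) = 0, so the triples are
  (1, t, -t) and (t, 1, -t).  Since \<psi> has odd order, \<psi>(-1) = 1, and the two families contribute
  the sums of \<psi>^(b+c)(t) and \<psi>^(a+c)(t) over t \<in> F_p^*, which vanish because 5 divides neither
  exponent.  What remains is the doubly counted triple (1, 1, -1), of weight 1.
*)

lemma sum_eq_0_if_bij_scales:
  fixes h :: "'a \<Rightarrow> 'b::idom"
  assumes "bij_betw f A A" and "\<And>x. x \<in> A \<Longrightarrow> h (f x) = c * h x" and "c \<noteq> 1"
  shows "sum h A = 0"
proof -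
  have "sum h A = (\<Sum>x\<in>A. h (f x))" by (rule sum.reindex_bij_betw[OF assms(1), symmetric])
  also have "\<dots> = c * sum h A" by (simp add: assms(2) sum_distrib_left)
  finally have "(1 - c) * sum h A = 0" by (simp add: algebra_simps)
  with assms(3) show ?thesis by simp
qed

lemma power_eq_if_cong_mod_order:
  fixes z :: "'a::monoid_mult"
  assumes z: "z ^ n = 1" and ab: "[a = b] (mod n)"
  shows "z ^ a = z ^ b"
proof -
  have power_mod: "z ^ k = z ^ (k mod n)" for k
  proof -
    have "z ^ k = (z ^ n) ^ (k div n) * z ^ (k mod n)"
      by (simp only: power_mult[symmetric] power_add[symmetric] mult_div_mod_eq)
    with z show ?thesis by simp
  qed
  have "a mod n = b mod n" using ab by (simp only: cong_def)
  then show ?thesis by (simp only: power_mod[of a] power_mod[of b])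
qed

lemma mult_mod_prime_in_units:
  fixes p :: nat
  assumes "prime p" "x \<in> {1..<p}" "y \<in> {1..<p}"
  shows "(x * y) mod p \<in> {1..<p}"
proof -
  have "\<not> p dvd x" "\<not> p dvd y"
    using assms(2,3) by (auto dest: dvd_imp_le)
  with assms(1) have "\<not> p dvd x * y" by (simp add: prime_dvd_mult_iff)
  with assms(1) show ?thesis by (simp add: dvd_eq_mod_eq_0 prime_gt_0_nat)
qed

lemma bij_betw_mult_mod_prime:
  fixes p :: nat
  assumes p: "prime p" and x: "x \<in> {1..<p}"
  shows "bij_betw (\<lambda>t. (x * t) mod p) {1..<p} {1..<p}"
proof -
  have "\<not> p dvd x" using x by (auto dest: dvd_imp_le)
  then have "coprime x p" using prime_imp_coprime[OF p] coprime_commute by blast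
  have inj: "inj_on (\<lambda>t. (x * t) mod p) {1..<p}"
  proof (rule inj_onI)
    fix s t assume "s \<in> {1..<p}" "t \<in> {1..<p}" "(x * s) mod p = (x * t) mod p"
    with \<open>coprime x p\<close> show "s = t"
      by (metis atLeastLessThan_iff cong_def cong_mult_lcancel_nat mod_less)
  qed
  have "(\<lambda>t. (x * t) mod p) ` {1..<p} \<subseteq> {1..<p}"
    using mult_mod_prime_in_units[OF p x] by blast
  with inj have "(\<lambda>t. (x * t) mod p) ` {1..<p} = {1..<p}"
    by (intro card_subset_eq) (simp_all add: card_image)
  with inj show ?thesis by (simp add: bij_betw_def)
qed

lemma mod_prime_inverse_exists:
  fixes p :: nat
  assumes "prime p" "x \<in> {1..<p}"
  obtains s where "s \<in> {1..<p}" "(x * s) mod p = 1"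
proof -
  have "1 \<in> {1..<p}" using prime_gt_1_nat[OF assms(1)] by simp
  with bij_betw_mult_mod_prime[OF assms] have "1 \<in> (\<lambda>t. (x * t) mod p) ` {1..<p}"
    by (simp add: bij_betw_def)
  with that show ?thesis by force
qed

lemma minus_one_squared_mod:
  fixes p :: nat
  assumes "1 < p"
  shows "((p - 1) * (p - 1)) mod p = 1"
proof -
  define q where "q = p - 2"
  with assms have q: "p = q + 2" by simp
  then have "(p - 1) * (p - 1) = 1 + q * p" by (simp add: algebra_simps)
  then have "((p - 1) * (p - 1)) mod p = 1 mod p" by (simp only: mod_mult_self1)
  with assms show ?thesis by simp
qed

lemma mchar_zero: "mchar p \<chi> \<Longrightarrow> \<chi> 0 = 0"
  and mchar_one: "mchar p \<chi> \<Longrightarrow> \<chi> 1 = 1"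
  and mchar_mult: "mchar p \<chi> \<Longrightarrow> x \<in> {1..<p} \<Longrightarrow> y \<in> {1..<p} \<Longrightarrow> \<chi> ((x * y) mod p) = \<chi> x * \<chi> y"
  and mchar_eq_0_if_ge: "mchar p \<chi> \<Longrightarrow> p \<le> x \<Longrightarrow> \<chi> x = 0"
  by (auto simp: mchar_def)

lemma mchar_eq_0_outside_units: "mchar p \<chi> \<Longrightarrow> x \<notin> {1..<p} \<Longrightarrow> \<chi> x = 0"
  by (cases "x = 0") (auto simp: mchar_zero mchar_eq_0_if_ge)

lemma mchar_power_mod:
  fixes p :: nat
  assumes p: "prime p" and \<chi>: "mchar p \<chi>" and g: "g \<in> {1..<p}"
  shows "g ^ k mod p \<in> {1..<p} \<and> \<chi> (g ^ k mod p) = \<chi> g ^ k"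
proof (induction k)
  case 0
  then show ?case using prime_gt_1_nat[OF p] mchar_one[OF \<chi>] by simp
next
  case (Suc k)
  have "g ^ Suc k mod p = ((g ^ k mod p) * g) mod p"
    by (simp add: mod_mult_right_eq mult.commute)
  with Suc g show ?case
    using mult_mod_prime_in_units[OF p] mchar_mult[OF \<chi>] by (simp del: atLeastLessThan_iff)
qed

lemma mchar_power_p_minus_1:
  fixes p :: nat
  assumes p: "prime p" and \<chi>: "mchar p \<chi>" and x: "x \<in> {1..<p}"
  shows "\<chi> x ^ (p - 1) = 1"
proof -
  have "[x ^ (p - 1) = 1] (mod p)"
    using x by (intro fermat_theorem[OF p]) (auto dest: dvd_imp_le)
  then have "x ^ (p - 1) mod p = 1"
    using prime_gt_1_nat[OF p] by (simp add: cong_def)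
  then show ?thesis using mchar_power_mod[OF p \<chi> x, of "p - 1"] mchar_one[OF \<chi>] by simp
qed

lemma mchar_nonzero:
  fixes p :: nat
  assumes "prime p" "mchar p \<chi>" "x \<in> {1..<p}"
  shows "\<chi> x \<noteq> 0"
  using mchar_power_p_minus_1[OF assms] prime_gt_1_nat[OF assms(1)] by (auto simp: power_0_left)

lemma mchar_cmul: "mchar p \<chi> \<Longrightarrow> mchar p \<phi> \<Longrightarrow> mchar p (cmul \<chi> \<phi>)"
  unfolding mchar_def cmul_def by (simp add: mult_ac)

subsection \<open>Characters via a primitive root\<close>

locale primroot_mod_prime =
  fixes p g :: nat
  assumes prime: "prime p" and primroot: "residue_primroot p g" and generator_less: "g < p"
begin

lemma coprime_generator: "coprime p g"
  using primroot by (simp add: residue_primroot_def)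

lemma ord_generator: "ord p g = p - 1"
  using primroot totient_prime[OF prime] by (simp add: residue_primroot_def)

lemma bij_betw_power_mod: "bij_betw (\<lambda>i. g ^ i mod p) {..<p - 1} {1..<p}"
proof -
  have "bij_betw (\<lambda>i. g ^ i mod p) {..<totient p} (totatives p)"
    by (rule residue_primroot_is_generator[OF prime_gt_1_nat[OF prime] primroot])
  moreover have "{0<..<p} = {1..<p}" by fastforce
  ultimately show ?thesis by (simp only: totient_prime[OF prime] totatives_prime[OF prime])
qed

lemma generator_unit: "g \<in> {1..<p}"
proof -
  have "g \<noteq> 0"
  proof
    assume "g = 0"
    with coprime_generator have "p = 1" by simp
    with prime show False by simp
  qed
  with generator_less show ?thesis by simp
qed

definition dlog :: "nat \<Rightarrow> nat" where
  "dlog = inv_into {..<p - 1} (\<lambda>i. g ^ i mod p)"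

lemma dlog_less: "x \<in> {1..<p} \<Longrightarrow> dlog x < p - 1"
  and power_dlog_mod: "x \<in> {1..<p} \<Longrightarrow> g ^ dlog x mod p = x"
proof -
  assume "x \<in> {1..<p}"
  then have "x \<in> (\<lambda>i. g ^ i mod p) ` {..<p - 1}"
    using bij_betw_power_mod by (simp add: bij_betw_def)
  then show "dlog x < p - 1" and "g ^ dlog x mod p = x"
    unfolding dlog_def using f_inv_into_f[of x "\<lambda>i. g ^ i mod p"]
    by (simp_all add: inv_into_into[THEN lessThan_iff[THEN iffD1]])
qed

lemma dlog_power_mod: "i < p - 1 \<Longrightarrow> dlog (g ^ i mod p) = i"
  using bij_betw_inv_into_left[OF bij_betw_power_mod] by (simp add: dlog_def)

lemma dlog_mult_cong:
  assumes x: "x \<in> {1..<p}" and y: "y \<in> {1..<p}"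
  shows "[dlog ((x * y) mod p) = dlog x + dlog y] (mod (p - 1))"
proof -
  have "g ^ dlog ((x * y) mod p) mod p = (x * y) mod p"
    by (rule power_dlog_mod[OF mult_mod_prime_in_units[OF prime x y]])
  also have "\<dots> = ((g ^ dlog x mod p) * (g ^ dlog y mod p)) mod p"
    by (simp only: power_dlog_mod[OF x] power_dlog_mod[OF y])
  also have "\<dots> = g ^ (dlog x + dlog y) mod p"
    by (simp only: power_add mod_mult_eq)
  finally have "[g ^ dlog ((x * y) mod p) = g ^ (dlog x + dlog y)] (mod p)"
    by (simp only: cong_def)
  then show ?thesis
    using order_divides_expdiff[OF coprime_generator] by (simp add: ord_generator)
qed

definition char_of_root :: "complex \<Rightarrow> nat \<Rightarrow> complex" where
  "char_of_root z x = (if x \<in> {1..<p} then z ^ dlog x else 0)"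

lemma mchar_char_of_root:
  assumes z: "z ^ (p - 1) = 1"
  shows "mchar p (char_of_root z)"
  unfolding mchar_def
proof (intro conjI ballI allI impI)
  have "dlog 1 = 0"
    using dlog_power_mod[of 0] prime_gt_1_nat[OF prime] by simp
  then show "char_of_root z 1 = 1"
    using prime_gt_1_nat[OF prime] by (simp add: char_of_root_def)
  fix x y :: nat assume x: "x \<in> {1..<p}" and y: "y \<in> {1..<p}"
  show "char_of_root z ((x * y) mod p) = char_of_root z x * char_of_root z y"
    using x y mult_mod_prime_in_units[OF prime x y]
      power_eq_if_cong_mod_order[OF z dlog_mult_cong[OF x y]]
    by (simp add: char_of_root_def power_add)
qed (simp_all add: char_of_root_def)

lemma char_eq_char_of_root:
  assumes \<chi>: "mchar p \<chi>"
  shows "\<chi> = char_of_root (\<chi> g)"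
proof
  fix x
  show "\<chi> x = char_of_root (\<chi> g) x"
  proof (cases "x \<in> {1..<p}")
    case True
    then show ?thesis
      using power_dlog_mod[OF True] mchar_power_mod[OF prime \<chi> generator_unit, of "dlog x"]
      by (simp add: char_of_root_def)
  next
    case False
    then show ?thesis
      unfolding char_of_root_def if_not_P[OF False] by (rule mchar_eq_0_outside_units[OF \<chi>])
  qed
qed

lemma chars_eq_image_roots: "chars p = char_of_root ` {z. z ^ (p - 1) = 1}"
proof
  show "chars p \<subseteq> char_of_root ` {z. z ^ (p - 1) = 1}"
  proof
    fix \<chi> assume "\<chi> \<in> chars p"
    then have \<chi>: "mchar p \<chi>" by (simp add: chars_def)
    then have "\<chi> = char_of_root (\<chi> g)" by (rule char_eq_char_of_root)
    moreover have "\<chi> g ^ (p - 1) = 1"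
      by (rule mchar_power_p_minus_1[OF prime \<chi> generator_unit])
    ultimately show "\<chi> \<in> char_of_root ` {z. z ^ (p - 1) = 1}" by blast
  qed
qed (auto simp: chars_def mchar_char_of_root)

lemma inj_on_char_of_root: "inj_on char_of_root {z. z ^ (p - 1) = 1}"
proof (cases "p - 1 = 1")
  case True
  then show ?thesis by (simp add: inj_on_def)
next
  case False
  then have "1 < p - 1" using prime_gt_1_nat[OF prime] by linarith
  then have "dlog g = 1" using dlog_power_mod[of 1] generator_less by simp
  then have "char_of_root z g = z" for z using generator_unit by (simp add: char_of_root_def)
  then show ?thesis by (metis inj_onI)
qed

lemma finite_chars: "finite (chars p)"
  and card_chars: "card (chars p) = p - 1"
proof -
  have n: "0 < p - 1" using prime_gt_1_nat[OF prime] by simp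
  then show "finite (chars p)"
    unfolding chars_eq_image_roots by (simp add: finite_roots_unity)
  have "card (chars p) = card {z :: complex. z ^ (p - 1) = 1}"
    unfolding chars_eq_image_roots by (rule card_image[OF inj_on_char_of_root])
  with n show "card (chars p) = p - 1" by (simp only: card_roots_unity_eq)
qed

lemma exists_char_ne_1:
  assumes y: "y \<in> {1..<p}" "y \<noteq> 1"
  shows "\<exists>\<chi>\<in>chars p. \<chi> y \<noteq> 1"
proof -
  define n where "n = p - 1"
  have n: "0 < n" using prime_gt_1_nat[OF prime] by (simp add: n_def)
  define w where "w = cis (2 * pi / real n)"
  have w_power: "w ^ k = cis (2 * pi * real k / real n)" for k
    by (simp add: w_def DeMoivre mult_ac)
  have "w ^ n = 1" using n by (simp add: w_power)
  then have "char_of_root w \<in> chars p"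
    using mchar_char_of_root by (simp add: chars_def n_def)
  moreover have "dlog y \<noteq> 0"
  proof
    assume "dlog y = 0"
    with power_dlog_mod[OF y(1)] have "y = 1 mod p" by simp
    with y(2) prime_gt_1_nat[OF prime] show False by simp
  qed
  have "w ^ dlog y \<noteq> 1"
  proof
    assume "w ^ dlog y = 1"
    then have eq: "cis (2 * pi * real (dlog y) / real n) = cis (2 * pi * real 0 / real n)"
      by (simp add: w_power)
    have "inj_on (\<lambda>k. cis (2 * pi * real k / real n)) {..<n}"
      using bij_betw_roots_unity[OF n] by (simp add: bij_betw_def)
    from inj_onD[OF this eq] have "dlog y = 0"
      using dlog_less[OF y(1)] n by (simp add: n_def)
    with \<open>dlog y \<noteq> 0\<close> show False ..
  qed
  then have "char_of_root w y \<noteq> 1" using y by (simp add: char_of_root_def)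
  ultimately show ?thesis by blast
qed

end

lemma primroot_mod_prime_exists:
  assumes "prime p"
  obtains g where "primroot_mod_prime p g"
proof -
  obtain g where "residue_primroot p g"
    using prime_primitive_root_exists[OF prime_gt_1_nat[OF assms] assms] by blast
  then have "primroot_mod_prime p (g mod p)"
    using assms prime_gt_0_nat[OF assms] by (simp add: primroot_mod_prime_def)
  then show ?thesis by (rule that)
qed

lemma
  assumes "prime p"
  shows finite_chars: "finite (chars p)"
    and card_chars: "card (chars p) = p - 1"
    and exists_char_ne_1: "y \<in> {1..<p} \<Longrightarrow> y \<noteq> 1 \<Longrightarrow> \<exists>\<chi>\<in>chars p. \<chi> y \<noteq> 1"
proof -
  obtain g where "primroot_mod_prime p g" using primroot_mod_prime_exists[OF assms] .
  then interpret primroot_mod_prime p g .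
  show "finite (chars p)" "card (chars p) = p - 1" by (fact finite_chars card_chars)+
  show "y \<in> {1..<p} \<Longrightarrow> y \<noteq> 1 \<Longrightarrow> \<exists>\<chi>\<in>chars p. \<chi> y \<noteq> 1" by (fact exists_char_ne_1)
qed

subsection \<open>Orthogonality\<close>

lemma bij_betw_cmul_chars:
  assumes p: "prime p" and \<chi>0: "\<chi>0 \<in> chars p"
  shows "bij_betw (cmul \<chi>0) (chars p) (chars p)"
proof -
  have m0: "mchar p \<chi>0" using \<chi>0 by (simp add: chars_def)
  have inj: "inj_on (cmul \<chi>0) (chars p)"
  proof (rule inj_onI)
    fix \<chi>1 \<chi>2 assume "\<chi>1 \<in> chars p" "\<chi>2 \<in> chars p" and eq: "cmul \<chi>0 \<chi>1 = cmul \<chi>0 \<chi>2"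
    then have m: "mchar p \<chi>1" "mchar p \<chi>2" by (simp_all add: chars_def)
    show "\<chi>1 = \<chi>2"
    proof
      fix x show "\<chi>1 x = \<chi>2 x"
      proof (cases "x \<in> {1..<p}")
        case True
        then have "\<chi>0 x \<noteq> 0" by (rule mchar_nonzero[OF p m0])
        with fun_cong[OF eq, of x] show ?thesis by (simp add: cmul_def)
      qed (simp add: mchar_eq_0_outside_units[OF m(1)] mchar_eq_0_outside_units[OF m(2)])
    qed
  qed
  have "cmul \<chi>0 ` chars p \<subseteq> chars p"
    using mchar_cmul[OF m0] by (auto simp: chars_def)
  then have "cmul \<chi>0 ` chars p = chars p"
    by (rule card_subset_eq[OF finite_chars[OF p]]) (rule card_image[OF inj])
  with inj show ?thesis by (simp add: bij_betw_def)
qed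

lemma sum_chars_apply:
  assumes p: "prime p" and y: "y \<in> {1..<p}"
  shows "(\<Sum>\<chi>\<in>chars p. \<chi> y) = (if y = 1 then of_nat (p - 1) else 0)"
proof (cases "y = 1")
  case True
  then have "(\<Sum>\<chi>\<in>chars p. \<chi> y) = (\<Sum>\<chi>\<in>chars p. 1)"
    by (intro sum.cong) (simp_all add: chars_def mchar_def)
  with True show ?thesis by (simp add: card_chars[OF p])
next
  case False
  then obtain \<chi>0 where "\<chi>0 \<in> chars p" "\<chi>0 y \<noteq> 1"
    using exists_char_ne_1[OF p y] by blast
  moreover have "cmul \<chi>0 \<chi> y = \<chi>0 y * \<chi> y" for \<chi> by (simp add: cmul_def)
  ultimately have "(\<Sum>\<chi>\<in>chars p. \<chi> y) = 0"
    using sum_eq_0_if_bij_scales[OF bij_betw_cmul_chars[OF p], where h = "\<lambda>\<chi>. \<chi> y"] by blast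
  with False show ?thesis by simp
qed

lemma sum_chars_apply_mult_inverse:
  assumes p: "prime p" and A: "A \<in> {1..<p}" and B: "B \<in> {1..<p}"
  shows "(\<Sum>\<chi>\<in>chars p. \<chi> A * inverse (\<chi> B)) = (if A = B then of_nat (p - 1) else 0)"
proof -
  obtain s where s: "s \<in> {1..<p}" and Bs: "(B * s) mod p = 1"
    using mod_prime_inverse_exists[OF p B] .
  have "\<chi> A * inverse (\<chi> B) = \<chi> ((A * s) mod p)" if "\<chi> \<in> chars p" for \<chi>
  proof -
    from that have \<chi>: "mchar p \<chi>" by (simp add: chars_def)
    have "\<chi> B * \<chi> s = 1" using mchar_mult[OF \<chi> B s] Bs mchar_one[OF \<chi>] by simp
    then have "inverse (\<chi> B) = \<chi> s" by (simp add: inverse_unique)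
    then show ?thesis using mchar_mult[OF \<chi> A s] by simp
  qed
  then have "(\<Sum>\<chi>\<in>chars p. \<chi> A * inverse (\<chi> B)) = (\<Sum>\<chi>\<in>chars p. \<chi> ((A * s) mod p))"
    by (rule sum.cong[OF refl])
  also have "\<dots> = (if (A * s) mod p = 1 then of_nat (p - 1) else 0)"
    by (rule sum_chars_apply[OF p mult_mod_prime_in_units[OF p A s]])
  also have "(A * s) mod p = 1 \<longleftrightarrow> A = B"
    using Bs bij_betw_mult_mod_prime[OF p s] A B
    by (auto simp: bij_betw_def inj_on_def mult.commute)
  finally show ?thesis .
qed

lemma sum_chars_jacobi_term:
  assumes p: "prime p"
  shows "(\<Sum>\<chi>\<in>chars p. \<chi> (p - 1) * \<chi> t3 * inverse (\<chi> t1 * \<chi> t2)) =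
    (if t1 \<in> {1..<p} \<and> t2 \<in> {1..<p} \<and> t3 \<in> {1..<p} \<and> ((p - 1) * t3) mod p = (t1 * t2) mod p
     then of_nat (p - 1) else 0)"
proof (cases "t1 \<in> {1..<p} \<and> t2 \<in> {1..<p} \<and> t3 \<in> {1..<p}")
  case True
  have m1: "p - 1 \<in> {1..<p}" using prime_gt_1_nat[OF p] by simp
  have "\<chi> (p - 1) * \<chi> t3 * inverse (\<chi> t1 * \<chi> t2) =
      \<chi> (((p - 1) * t3) mod p) * inverse (\<chi> ((t1 * t2) mod p))" if "\<chi> \<in> chars p" for \<chi>
    using that True m1 by (simp add: chars_def mchar_mult)
  then have "(\<Sum>\<chi>\<in>chars p. \<chi> (p - 1) * \<chi> t3 * inverse (\<chi> t1 * \<chi> t2)) =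
      (\<Sum>\<chi>\<in>chars p. \<chi> (((p - 1) * t3) mod p) * inverse (\<chi> ((t1 * t2) mod p)))"
    by (rule sum.cong[OF refl])
  also have "\<dots> = (if ((p - 1) * t3) mod p = (t1 * t2) mod p then of_nat (p - 1) else 0)"
    using True m1 by (intro sum_chars_apply_mult_inverse[OF p] mult_mod_prime_in_units[OF p]) auto
  finally show ?thesis using True by simp
next
  case False
  then have "\<chi> t1 = 0 \<or> \<chi> t2 = 0 \<or> \<chi> t3 = 0" if "\<chi> \<in> chars p" for \<chi>
    using that mchar_eq_0_outside_units by (auto simp: chars_def)
  then have "(\<Sum>\<chi>\<in>chars p. \<chi> (p - 1) * \<chi> t3 * inverse (\<chi> t1 * \<chi> t2)) = 0"
    by (intro sum.neutral) fastforce
  moreover have "\<not> (t1 \<in> {1..<p} \<and> t2 \<in> {1..<p} \<and> t3 \<in> {1..<p} \<and> ((p - 1) * t3) mod p = (t1 * t2) mod p)"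
    using False by blast
  ultimately show ?thesis by (simp only: if_False)
qed

subsection \<open>Summing the Jacobi sums over all characters\<close>

lemma nat_mod_eq_iff_int_dvd: "(x::nat) mod p = y mod p \<longleftrightarrow> int p dvd int x - int y"
  by (simp only: cong_def[symmetric] cong_int_iff[symmetric] cong_iff_dvd_diff)

lemma jacobi_system_iff:
  fixes p t1 t2 t3 :: nat
  assumes p: "prime p" and t1: "t1 \<in> {1..<p}" and t2: "t2 \<in> {1..<p}" and t3: "t3 < p"
  shows "(t1 + t2 + t3) mod p = 1 mod p \<and> ((p - 1) * t3) mod p = (t1 * t2) mod p \<longleftrightarrow>
         (t1 = 1 \<or> t2 = 1) \<and> t3 = ((p - 1) * t1 * t2) mod p"
proof -
  define P a b c where "P = int p" and "a = int t1" and "b = int t2" and "c = int t3"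
  have P: "prime P" using p by (simp add: P_def)
  have minus_one: "int (p - 1) = P - 1" using prime_gt_0_nat[OF p] by (simp add: P_def of_nat_diff)
  have sum_iff: "(t1 + t2 + t3) mod p = 1 mod p \<longleftrightarrow> P dvd a + b + c - 1"
    unfolding nat_mod_eq_iff_int_dvd by (simp add: P_def a_def b_def c_def)
  have "((p - 1) * t3) mod p = (t1 * t2) mod p \<longleftrightarrow> P dvd (P - 1) * c - a * b"
    unfolding nat_mod_eq_iff_int_dvd by (simp only: of_nat_mult minus_one P_def a_def b_def c_def)
  also have "(P - 1) * c - a * b = P * c - (a * b + c)" by (simp add: algebra_simps)
  finally have prod_iff: "((p - 1) * t3) mod p = (t1 * t2) mod p \<longleftrightarrow> P dvd a * b + c"
    by (simp add: dvd_diff_right_iff)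
  have "t3 = ((p - 1) * t1 * t2) mod p \<longleftrightarrow> t3 mod p = ((p - 1) * t1 * t2) mod p"
    using t3 by simp
  also have "\<dots> \<longleftrightarrow> P dvd c - (P - 1) * a * b"
    unfolding nat_mod_eq_iff_int_dvd by (simp only: of_nat_mult minus_one P_def a_def b_def c_def)
  also have "c - (P - 1) * a * b = (a * b + c) - P * (a * b)" by (simp add: algebra_simps)
  finally have solution_iff: "t3 = ((p - 1) * t1 * t2) mod p \<longleftrightarrow> P dvd a * b + c"
    by (simp add: dvd_diff_left_iff)
  have unit_iff: "P dvd int t - 1 \<longleftrightarrow> t = 1" if "t \<in> {1..<p}" for t
    using that nat_mod_eq_iff_int_dvd[of t p 1] prime_gt_1_nat[OF p] by (simp add: P_def)
  have "a + b + c - 1 = (a * b + c) - (a - 1) * (b - 1)" by (simp add: algebra_simps)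
  then have "P dvd a * b + c \<Longrightarrow> P dvd a + b + c - 1 \<longleftrightarrow> P dvd (a - 1) * (b - 1)"
    by (simp only: dvd_diff_right_iff)
  also have "P dvd (a - 1) * (b - 1) \<longleftrightarrow> t1 = 1 \<or> t2 = 1"
    using P t1 t2 unit_iff by (simp add: prime_dvd_mult_iff a_def b_def)
  finally show ?thesis using sum_iff prod_iff solution_iff by blast
qed

text \<open>Triples of units with t1 + t2 + t3 = 1 and t1 t2 = -t3 (with p - 1 representing -1):
  the terms of the Jacobi sums that survive the summation over \<chi>.\<close>

definition jacobi_support :: "nat \<Rightarrow> (nat \<times> nat \<times> nat) set" where
  "jacobi_support p = {(t1, t2, t3). t1 \<in> {1..<p} \<and> t2 \<in> {1..<p} \<and> t3 \<in> {1..<p} \<and>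
     (t1 + t2 + t3) mod p = 1 mod p \<and> ((p - 1) * t3) mod p = (t1 * t2) mod p}"

lemma jacobi_support_eq_image:
  fixes p :: nat
  assumes p: "prime p"
  shows "jacobi_support p =
    (\<lambda>(t1, t2). (t1, t2, ((p - 1) * t1 * t2) mod p)) ` ({1} \<times> {1..<p} \<union> {1..<p} \<times> {1})"
    (is "_ = ?h ` ?P")
proof
  show "jacobi_support p \<subseteq> ?h ` ?P"
  proof
    fix t assume "t \<in> jacobi_support p"
    then obtain t1 t2 t3 where t: "t = (t1, t2, t3)" and u: "t1 \<in> {1..<p}" "t2 \<in> {1..<p}" "t3 \<in> {1..<p}"
      and eqs: "(t1 + t2 + t3) mod p = 1 mod p" "((p - 1) * t3) mod p = (t1 * t2) mod p"
      by (auto simp: jacobi_support_def)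
    have "t3 < p" using u(3) by simp
    with eqs have "(t1 = 1 \<or> t2 = 1) \<and> t3 = ((p - 1) * t1 * t2) mod p"
      using jacobi_system_iff[OF p u(1,2)] by blast
    with u show "t \<in> ?h ` ?P" by (intro rev_image_eqI[of "(t1, t2)"]) (auto simp: t)
  qed
  show "?h ` ?P \<subseteq> jacobi_support p"
  proof
    fix t assume "t \<in> ?h ` ?P"
    then obtain t1 t2 where t: "t = ?h (t1, t2)" and u: "t1 \<in> {1..<p}" "t2 \<in> {1..<p}"
      and one: "t1 = 1 \<or> t2 = 1"
      using prime_gt_1_nat[OF p] by auto
    have m1: "p - 1 \<in> {1..<p}" using prime_gt_1_nat[OF p] by simp
    have "((p - 1) * t1 * t2) mod p = ((((p - 1) * t1) mod p) * t2) mod p"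
      by (simp add: mod_mult_left_eq)
    then have u3: "((p - 1) * t1 * t2) mod p \<in> {1..<p}"
      using mult_mod_prime_in_units[OF p] m1 u by metis
    show "t \<in> jacobi_support p"
      using jacobi_system_iff[OF p u, of "((p - 1) * t1 * t2) mod p"] u u3 one
      by (simp add: t jacobi_support_def)
  qed
qed

lemma sum_jacobi_support:
  fixes F :: "nat \<times> nat \<times> nat \<Rightarrow> 'a::ab_group_add"
  assumes p: "prime p"
  shows "(\<Sum>t\<in>jacobi_support p. F t) =
    (\<Sum>t\<in>{1..<p}. F (1, t, ((p - 1) * t) mod p)) + (\<Sum>t\<in>{1..<p}. F (t, 1, ((p - 1) * t) mod p))
    - F (1, 1, p - 1)"
proof -
  define h where "h = (\<lambda>(t1, t2). (t1, t2, ((p - 1) * t1 * t2) mod p))"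
  define A B where "A = {1::nat} \<times> {1..<p}" and "B = {1..<p} \<times> {1::nat}"
  have "A \<inter> B = {(1, 1)}" using prime_gt_1_nat[OF p] by (auto simp: A_def B_def)
  have "inj_on h (A \<union> B)" by (rule inj_onI) (simp add: h_def split: prod.splits)
  then have "(\<Sum>t\<in>jacobi_support p. F t) = (\<Sum>q\<in>A \<union> B. F (h q))"
    unfolding jacobi_support_eq_image[OF p] h_def[symmetric] A_def[symmetric] B_def[symmetric]
    by (rule sum.reindex[unfolded comp_def])
  also have "\<dots> = (\<Sum>q\<in>A. F (h q)) + (\<Sum>q\<in>B. F (h q)) - F (h (1, 1))"
    using sum.union_inter[of A B "\<lambda>q. F (h q)"] \<open>A \<inter> B = {(1, 1)}\<close>
    by (simp add: A_def B_def algebra_simps)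
  also have "(\<Sum>q\<in>A. F (h q)) = (\<Sum>t\<in>{1..<p}. F (1, t, ((p - 1) * t) mod p))"
    unfolding A_def sum.cartesian_product' by (simp add: h_def)
  also have "(\<Sum>q\<in>B. F (h q)) = (\<Sum>t\<in>{1..<p}. F (t, 1, ((p - 1) * t) mod p))"
    unfolding B_def sum.cartesian_product' by (simp add: h_def)
  also have "h (1, 1) = (1, 1, p - 1)" using prime_gt_1_nat[OF p] by (simp add: h_def)
  finally show ?thesis .
qed

lemma sum_chars_twisted_jacobi3:
  fixes \<phi>1 \<phi>2 \<phi>3 :: "nat \<Rightarrow> complex"
  assumes p: "prime p"
  shows "(\<Sum>\<chi>\<in>chars p. \<chi> (p - 1) * jacobi3 p (cmul (cinv \<chi>) \<phi>1) (cmul (cinv \<chi>) \<phi>2) (cmul \<chi> \<phi>3)) =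
    of_nat (p - 1) * (\<Sum>(t1, t2, t3)\<in>jacobi_support p. \<phi>1 t1 * \<phi>2 t2 * \<phi>3 t3)"
proof -
  define T where "T = {(t1, t2, t3). t1 < p \<and> t2 < p \<and> t3 < p \<and> (t1 + t2 + t3) mod p = 1 mod p}"
  define \<Phi> where "\<Phi> = (\<lambda>(t1, t2, t3). \<phi>1 t1 * \<phi>2 t2 * \<phi>3 t3)"
  define J where "J = (\<lambda>\<chi> (t1, t2, t3). cmul (cinv \<chi>) \<phi>1 t1 * cmul (cinv \<chi>) \<phi>2 t2 * cmul \<chi> \<phi>3 t3)"
  have "finite T" by (rule finite_subset[of _ "{..<p} \<times> {..<p} \<times> {..<p}"]) (auto simp: T_def)
  have inner: "(\<Sum>\<chi>\<in>chars p. \<chi> (p - 1) * J \<chi> t) =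
      of_nat (p - 1) * (if t \<in> jacobi_support p then \<Phi> t else 0)" if "t \<in> T" for t
  proof -
    obtain t1 t2 t3 where t: "t = (t1, t2, t3)" by (cases t)
    have "\<chi> (p - 1) * J \<chi> t = \<Phi> t * (\<chi> (p - 1) * \<chi> t3 * inverse (\<chi> t1 * \<chi> t2))" for \<chi>
      by (simp add: t J_def \<Phi>_def cmul_def cinv_def mult_ac)
    then have "(\<Sum>\<chi>\<in>chars p. \<chi> (p - 1) * J \<chi> t) =
        \<Phi> t * (\<Sum>\<chi>\<in>chars p. \<chi> (p - 1) * \<chi> t3 * inverse (\<chi> t1 * \<chi> t2))"
      by (simp only: sum_distrib_left)
    also have "\<dots> = \<Phi> t * (if t1 \<in> {1..<p} \<and> t2 \<in> {1..<p} \<and> t3 \<in> {1..<p} \<and>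
        ((p - 1) * t3) mod p = (t1 * t2) mod p then of_nat (p - 1) else 0)"
      by (simp only: sum_chars_jacobi_term[OF p])
    also have "(t1 \<in> {1..<p} \<and> t2 \<in> {1..<p} \<and> t3 \<in> {1..<p} \<and> ((p - 1) * t3) mod p = (t1 * t2) mod p)
        \<longleftrightarrow> t \<in> jacobi_support p"
      using that by (auto simp: t T_def jacobi_support_def)
    finally show ?thesis by simp
  qed
  have "(\<Sum>\<chi>\<in>chars p. \<chi> (p - 1) * jacobi3 p (cmul (cinv \<chi>) \<phi>1) (cmul (cinv \<chi>) \<phi>2) (cmul \<chi> \<phi>3)) =
      (\<Sum>\<chi>\<in>chars p. \<Sum>t\<in>T. \<chi> (p - 1) * J \<chi> t)"
    unfolding jacobi3_def T_def[symmetric] J_def by (simp only: sum_distrib_left)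
  also have "\<dots> = (\<Sum>t\<in>T. \<Sum>\<chi>\<in>chars p. \<chi> (p - 1) * J \<chi> t)"
    by (rule sum.swap)
  also have "\<dots> = of_nat (p - 1) * (\<Sum>t\<in>T. if t \<in> jacobi_support p then \<Phi> t else 0)"
    unfolding sum_distrib_left by (rule sum.cong[OF refl inner])
  also have "(\<Sum>t\<in>T. if t \<in> jacobi_support p then \<Phi> t else 0) = (\<Sum>t\<in>{t \<in> T. t \<in> jacobi_support p}. \<Phi> t)"
    by (rule sum.inter_filter[OF \<open>finite T\<close>, symmetric])
  also have "{t \<in> T. t \<in> jacobi_support p} = jacobi_support p"
    by (auto simp: T_def jacobi_support_def)
  finally show ?thesis by (simp add: \<Phi>_def)
qed

lemma
  fixes p :: nat
  assumes p: "prime p" and \<psi>: "mchar p \<psi>"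
  shows char_order_pos: "0 < char_order p \<psi>"
    and mchar_power_char_order: "x \<in> {1..<p} \<Longrightarrow> \<psi> x ^ char_order p \<psi> = 1"
proof -
  define Q where "Q = (\<lambda>n. 0 < n \<and> (\<forall>x\<in>{1..<p}. \<psi> x ^ n = 1))"
  have "Q (p - 1)"
    using mchar_power_p_minus_1[OF p \<psi>] prime_gt_1_nat[OF p] by (simp add: Q_def)
  then have "Q (char_order p \<psi>)"
    unfolding char_order_def Q_def[symmetric] by (rule LeastI)
  then show "0 < char_order p \<psi>" and "x \<in> {1..<p} \<Longrightarrow> \<psi> x ^ char_order p \<psi> = 1"
    by (simp_all add: Q_def)
qed

lemma exists_mchar_power_ne_1:
  assumes "0 < k" and "k < char_order p \<psi>"
  shows "\<exists>x\<in>{1..<p}. \<psi> x ^ k \<noteq> 1"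
  using not_less_Least[of k "\<lambda>n. 0 < n \<and> (\<forall>x\<in>{1..<p}. \<psi> x ^ n = 1)"] assms
  by (auto simp: char_order_def)

lemma sum_units_mchar_power_eq_0:
  fixes p :: nat
  assumes p: "prime p" and \<psi>: "mchar p \<psi>" and x: "x \<in> {1..<p}" and "\<psi> x ^ k \<noteq> 1"
  shows "(\<Sum>t\<in>{1..<p}. \<psi> t ^ k) = 0"
proof (rule sum_eq_0_if_bij_scales[OF bij_betw_mult_mod_prime[OF p x]])
  show "\<psi> ((x * t) mod p) ^ k = \<psi> x ^ k * \<psi> t ^ k" if "t \<in> {1..<p}" for t
    using mchar_mult[OF \<psi> x that] by (simp add: power_mult_distrib)
qed fact

lemma sum_units_powi_eq_0:
  fixes p :: nat and k :: int
  assumes p: "prime p" and \<psi>: "mchar p \<psi>" and k: "\<not> int (char_order p \<psi>) dvd k"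
  shows "(\<Sum>t\<in>{1..<p}. \<psi> t powi k) = 0"
proof -
  define n where "n = char_order p \<psi>"
  define r where "r = nat (k mod int n)"
  have "0 < n" using char_order_pos[OF p \<psi>] by (simp add: n_def)
  then have "0 \<le> k mod int n" "k mod int n < int n" by simp_all
  moreover have "k mod int n \<noteq> 0" using k by (simp add: n_def dvd_eq_mod_eq_0)
  ultimately have r: "0 < r" "r < n" "k mod int n = int r" by (simp_all add: r_def)
  have "\<psi> t powi k = \<psi> t ^ r" if t: "t \<in> {1..<p}" for t
  proof -
    have "\<psi> t powi k = \<psi> t powi (int n * (k div int n) + k mod int n)" by simp
    also have "\<dots> = (\<psi> t ^ n) powi (k div int n) * \<psi> t powi (k mod int n)"
      using mchar_nonzero[OF p \<psi> t] by (subst power_int_add) (simp_all add: power_int_mult)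
    also have "\<dots> = \<psi> t ^ r" using mchar_power_char_order[OF p \<psi> t] r(3) by (simp add: n_def)
    finally show ?thesis .
  qed
  then have "(\<Sum>t\<in>{1..<p}. \<psi> t powi k) = (\<Sum>t\<in>{1..<p}. \<psi> t ^ r)" by (rule sum.cong[OF refl])
  also obtain x where "x \<in> {1..<p}" "\<psi> x ^ r \<noteq> 1"
    using exists_mchar_power_ne_1[OF r(1), of p \<psi>] r(2) unfolding n_def by blast
  then have "(\<Sum>t\<in>{1..<p}. \<psi> t ^ r) = 0" by (rule sum_units_mchar_power_eq_0[OF p \<psi>])
  finally show ?thesis .
qed

lemma mchar_minus_one_eq_1_if_odd_order:
  fixes p :: nat
  assumes p: "prime p" and \<psi>: "mchar p \<psi>" and "odd (char_order p \<psi>)"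
  shows "\<psi> (p - 1) = 1"
proof -
  obtain m where m: "char_order p \<psi> = 2 * m + 1" using assms(3) oddE by blast
  have u: "p - 1 \<in> {1..<p}" using prime_gt_1_nat[OF p] by simp
  have "\<psi> (p - 1) ^ 2 = 1"
    using mchar_mult[OF \<psi> u u] minus_one_squared_mod[OF prime_gt_1_nat[OF p]] mchar_one[OF \<psi>]
    by (simp add: power2_eq_square)
  then have "\<psi> (p - 1) ^ char_order p \<psi> = \<psi> (p - 1)" by (simp add: m power_add power_mult)
  with mchar_power_char_order[OF p \<psi> u] show ?thesis by simp
qed

lemma cpow_unit: "prime p \<Longrightarrow> mchar p \<psi> \<Longrightarrow> x \<in> {1..<p} \<Longrightarrow> cpow \<psi> a x = \<psi> x powi a"
  using mchar_nonzero by (simp add: cpow_def)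

lemma cpow_mult_cpow_minus:
  fixes p :: nat
  assumes p: "prime p" and \<psi>: "mchar p \<psi>" and even: "\<psi> (p - 1) = 1" and t: "t \<in> {1..<p}"
  shows "cpow \<psi> b t * cpow \<psi> c (((p - 1) * t) mod p) = \<psi> t powi (b + c)"
proof -
  have u: "p - 1 \<in> {1..<p}" using prime_gt_1_nat[OF p] by simp
  have "\<psi> (((p - 1) * t) mod p) = \<psi> t" using mchar_mult[OF \<psi> u t] even by simp
  then show ?thesis
    using cpow_unit[OF p \<psi>] mult_mod_prime_in_units[OF p u t] t mchar_nonzero[OF p \<psi> t]
    by (simp add: power_int_add)
qed

lemma sum_units_cpow_mult_cpow_minus:
  fixes p :: nat
  assumes p: "prime p" and \<psi>: "mchar p \<psi>" and even: "\<psi> (p - 1) = 1"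
    and "\<not> int (char_order p \<psi>) dvd b + c"
  shows "(\<Sum>t\<in>{1..<p}. cpow \<psi> b t * cpow \<psi> c (((p - 1) * t) mod p)) = 0"
proof -
  have "(\<Sum>t\<in>{1..<p}. cpow \<psi> b t * cpow \<psi> c (((p - 1) * t) mod p)) = (\<Sum>t\<in>{1..<p}. \<psi> t powi (b + c))"
    by (rule sum.cong[OF refl cpow_mult_cpow_minus[OF p \<psi> even]])
  also have "\<dots> = 0" by (rule sum_units_powi_eq_0[OF p \<psi> assms(4)])
  finally show ?thesis .
qed

theorem lemma2p2:
  fixes p :: nat and \<psi> :: "nat \<Rightarrow> complex" and a b c :: int
  assumes "prime p" and "p mod 5 = 1"
    and "\<psi> \<in> chars p" and "char_order p \<psi> = 5"
    and "\<not> (5 dvd (a + c))" and "\<not> (5 dvd (b + c))"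
  shows "(\<Sum>\<chi>\<in>chars p. \<chi> (p - 1) *
            jacobi3 p (cmul (cinv \<chi>) (cpow \<psi> a)) (cmul (cinv \<chi>) (cpow \<psi> b)) (cmul \<chi> (cpow \<psi> c)))
         = - (of_nat p - 1)"
proof -
  note p = \<open>prime p\<close>
  have \<psi>: "mchar p \<psi>" using assms(3) by (simp add: chars_def)
  have even: "\<psi> (p - 1) = 1"
    using mchar_minus_one_eq_1_if_odd_order[OF p \<psi>] assms(4) by simp
  have one: "cpow \<psi> k 1 = 1" for k
    using cpow_unit[OF p \<psi>, of 1 k] prime_gt_1_nat[OF p] mchar_one[OF \<psi>] by simp
  have "cpow \<psi> c (p - 1) = 1"
    using cpow_unit[OF p \<psi>, of "p - 1" c] even prime_gt_1_nat[OF p] by simp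
  moreover have "(\<Sum>t\<in>{1..<p}. cpow \<psi> k t * cpow \<psi> c (((p - 1) * t) mod p)) = 0"
    if "\<not> 5 dvd k + c" for k
    using sum_units_cpow_mult_cpow_minus[OF p \<psi> even] that assms(4) by simp
  ultimately have "(\<Sum>(t1, t2, t3)\<in>jacobi_support p. cpow \<psi> a t1 * cpow \<psi> b t2 * cpow \<psi> c t3) = -1"
    using sum_jacobi_support[OF p, of "\<lambda>(t1, t2, t3). cpow \<psi> a t1 * cpow \<psi> b t2 * cpow \<psi> c t3"]
      one assms(5,6) by (simp add: mult_ac)
  then show ?thesis
    unfolding sum_chars_twisted_jacobi3[OF p] using prime_gt_1_nat[OF p] by (simp add: of_nat_diff)
qed

end
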